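(* Let $M\in\mathrm{M}_n(\mathbb{K})$ be a cyclic matrix with minimal polynomial $f=f_1^{m_1}\cdots f_s^{m_s}$, where $f_1,\dots,f_s\in\mathbb{K}[x]$ are pairwise distinct monic irreducible polynomials and $m_i\ge1$. Let $\mathcal{C}\subseteq\mathbb{L}^n$ be a nonzero $M$-cyclic code of dimension $k$ with generator polynomial $g$. Then $M_k(\mathcal{C})=n$ if and only if $f_i\nmid g$ for all $i\in\{1,\dots,s\}$.
   Context: Let $\mathbb{L}/\mathbb{K}$ be a field extension of finite degree $m\ge n$. Vectors are row vectors. For $c=(c_1,\dots,c_n)\in\mathbb{L}^n$, $\mathrm{Rsupp}(c)\subseteq\mathbb{K}^n$ is the $\mathbb{K}$-row space of the $m\times n$ matrix over $\mathbb{K}$ whose $j$-th column is the coordinate vector of $c_j$ in a fixed $\mathbb{K}$-basis of $\mathbb{L}$; for an $\mathbb{L}$-subspace $\mathcal{D}$, $\mathrm{wt}_R(\mathcal{D})$ is the $\mathbb{K}$-dimension of the span of all $\mathrm{Rsupp}(d)$, $d\in\mathcal{D}$. For a $k$-dimensional $\mathbb{L}$-subspace $\mathcal{C}$ and $1\le r\le k$, $M_r(\mathcal{C})=\min\{\mathrm{wt}_R(\mathcal{D}):\mathcal{D}\subseteq\mathcal{C},\dim_{\mathbb{L}}\mathcal{D}=r\}$. A matrix $M\in\mathrm{M}_n(\mathbb{K})$ is cyclic if there is $v\in\mathbb{K}^n$ (a cyclic vector) with $(v,vM^t,\dots,v(M^t)^{n-1})$ a basis; equivalently its minimal polynomial $f$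 has degree $n$. An $M$-cyclic code is an $\mathbb{L}$-subspace $\mathcal{C}\subseteq\mathbb{L}^n$ with $cM^t\in\mathcal{C}$ for all $c\in\mathcal{C}$; each equals $\mathcal{C}_g=\{v\,g(M)^tP(M)^t:P\in\mathbb{L}[x]\}$ for a unique monic divisor $g$ of $f$ in $\mathbb{L}[x]$ (its generator polynomial), and $\dim\mathcal{C}_g=n-\deg g$. *)

theory Defs
  imports "HOL-Analysis.Analysis" "HOL-Computational_Algebra.Polynomial"
begin

text \<open>K is modelled by a field type 'k, L by a field type 'l together with an
  injective ring homomorphism phi : 'k => 'l (the inclusion of K into L).\<close>

definition field_embedding :: "('k::field \<Rightarrow> 'l::field) \<Rightarrow> bool" where
  "field_embedding \<phi> \<longleftrightarrow> inj \<phi> \<and> \<phi> 1 = 1 \<and>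
     (\<forall>a b. \<phi> (a + b) = \<phi> a + \<phi> b) \<and> (\<forall>a b. \<phi> (a * b) = \<phi> a * \<phi> b)"

definition is_K_basis :: "('k::field \<Rightarrow> 'l::field) \<Rightarrow> (nat \<Rightarrow> 'l) \<Rightarrow> nat \<Rightarrow> bool" where
  "is_K_basis \<phi> b m \<longleftrightarrow>
     (\<forall>x. \<exists>!a :: nat \<Rightarrow> 'k. (\<forall>i. m \<le> i \<longrightarrow> a i = 0) \<and> x = (\<Sum>i<m. \<phi> (a i) * b i))"

definition coords :: "('k::field \<Rightarrow> 'l::field) \<Rightarrow> (nat \<Rightarrow> 'l) \<Rightarrow> nat \<Rightarrow> 'l \<Rightarrow> nat \<Rightarrow> 'k" where
  "coords \<phi> b m x = (THE a. (\<forall>i. m \<le> i \<longrightarrow> a i = 0) \<and> x = (\<Sum>i<m. \<phi> (a i) * b i))"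

definition Rsupp :: "('k::field \<Rightarrow> 'l::field) \<Rightarrow> (nat \<Rightarrow> 'l) \<Rightarrow> nat \<Rightarrow> 'l^'n \<Rightarrow> ('k^'n) set" where
  "Rsupp \<phi> b m c = vec.span {(\<chi> j. coords \<phi> b m (c $ j) i) | i. i < m}"

definition wtR :: "('k::field \<Rightarrow> 'l::field) \<Rightarrow> (nat \<Rightarrow> 'l) \<Rightarrow> nat \<Rightarrow> ('l^'n) set \<Rightarrow> nat" where
  "wtR \<phi> b m D = vec.dim (vec.span (\<Union>d\<in>D. Rsupp \<phi> b m d))"

definition Mr :: "('k::field \<Rightarrow> 'l::field) \<Rightarrow> (nat \<Rightarrow> 'l) \<Rightarrow> nat \<Rightarrow> nat \<Rightarrow> ('l^'n) set \<Rightarrow> nat" where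
  "Mr \<phi> b m r C = Min {wtR \<phi> b m D | D. vec.subspace D \<and> D \<subseteq> C \<and> vec.dim D = r}"

definition mat_pow :: "'a::comm_ring_1^'n^'n \<Rightarrow> nat \<Rightarrow> 'a^'n^'n" where
  "mat_pow A i = ((\<lambda>X. A ** X) ^^ i) (mat 1)"

definition mat_scale :: "'a::comm_ring_1 \<Rightarrow> 'a^'n^'n \<Rightarrow> 'a^'n^'n" where
  "mat_scale c A = (\<chi> i j. c * A $ i $ j)"

definition poly_mat :: "'a::comm_ring_1 poly \<Rightarrow> 'a^'n^'n \<Rightarrow> 'a^'n^'n" where
  "poly_mat p A = (\<Sum>i\<le>degree p. mat_scale (coeff p i) (mat_pow A i))"

definition minimal_polynomial :: "'a::field^'n^'n \<Rightarrow> 'a poly \<Rightarrow> bool" where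
  "minimal_polynomial A f \<longleftrightarrow> lead_coeff f = 1 \<and> poly_mat f A = 0 \<and>
     (\<forall>q. poly_mat q A = 0 \<longrightarrow> f dvd q)"

text \<open>v is a cyclic vector: (v, v M^t, ..., v (M^t)^(n-1)) is a basis of K^n
  (row vectors; v (M^t)^i is M^i *v v).\<close>
definition cyclic_vector :: "'a::field^'n^'n \<Rightarrow> 'a^'n \<Rightarrow> bool" where
  "cyclic_vector A v \<longleftrightarrow> inj_on (\<lambda>i. mat_pow A i *v v) {..<CARD('n)} \<and>
     vec.independent ((\<lambda>i. mat_pow A i *v v) ` {..<CARD('n)}) \<and>
     vec.span ((\<lambda>i. mat_pow A i *v v) ` {..<CARD('n)}) = UNIV"

definition cyclic_matrix :: "'a::field^'n^'n \<Rightarrow> bool" where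
  "cyclic_matrix A \<longleftrightarrow> (\<exists>v. cyclic_vector A v)"

definition map_mat :: "('k \<Rightarrow> 'l) \<Rightarrow> 'k^'n^'n \<Rightarrow> 'l^'n^'n" where
  "map_mat \<phi> A = (\<chi> i j. \<phi> (A $ i $ j))"

definition map_vec :: "('k \<Rightarrow> 'l) \<Rightarrow> 'k^'n \<Rightarrow> 'l^'n" where
  "map_vec \<phi> v = (\<chi> j. \<phi> (v $ j))"

definition M_cyclic_code :: "('k::field \<Rightarrow> 'l::field) \<Rightarrow> 'k^'n^'n \<Rightarrow> ('l^'n) set \<Rightarrow> bool" where
  "M_cyclic_code \<phi> A C \<longleftrightarrow> vec.subspace C \<and> (\<forall>c\<in>C. map_mat \<phi> A *v c \<in> C)"

text \<open>C_g = { v g(M)^t P(M)^t : P in L[x] } for a cyclic vector v;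
  v g(M)^t P(M)^t = (P(M) g(M)) *v v.\<close>
definition code_of_gen :: "('k::field \<Rightarrow> 'l::field) \<Rightarrow> 'k^'n^'n \<Rightarrow> 'k^'n \<Rightarrow> 'l poly \<Rightarrow> ('l^'n) set" where
  "code_of_gen \<phi> A v g =
     {(poly_mat P (map_mat \<phi> A) ** poly_mat g (map_mat \<phi> A)) *v map_vec \<phi> v | P. True}"

definition generator_polynomial ::
  "('k::field \<Rightarrow> 'l::field) \<Rightarrow> 'k^'n^'n \<Rightarrow> 'k^'n \<Rightarrow> 'k poly \<Rightarrow> ('l^'n) set \<Rightarrow> 'l poly \<Rightarrow> bool" where
  "generator_polynomial \<phi> A v f C g \<longleftrightarrow>
     lead_coeff g = 1 \<and> g dvd map_poly \<phi> f \<and> C = code_of_gen \<phi> A v g"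

end

theory Submission
  imports Defs
begin

text \<open>Extend the pairing vdot w c = \<Sum>j w_j c_j to w \<in> K^n, c \<in> L^n. Expanding c in the
  K-basis b shows that w is orthogonal to all of C exactly when it is orthogonal to every rank
  support Rsupp(c), so M_k(C) = wt_R(C) equals n iff no nonzero w is orthogonal to C.
  If f_i(x) divides g, every codeword lies in the image of f_i(M), which is singular since f_i is
  a proper factor of the minimal polynomial; a left null vector of f_i(M) is orthogonal to C.
  Conversely, write g = \<Sum>_t b_t G_t with G_t \<in> K[x]. Orthogonality of w to C, the linear
  independence of the b_t and the cyclicity of v put every G_t into the ideal
  {q. w q(M) = 0}; this proper ideal contains f, so one irreducible f_i divides all G_t and hence g.\<close>

section \<open>Polynomials evaluated at square matrices\<close>

lemma mat_pow_0 [simp]: "mat_pow A 0 = mat 1"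
  by (simp add: mat_pow_def)

lemma mat_pow_Suc: "mat_pow A (Suc i) = A ** mat_pow A i"
  by (simp add: mat_pow_def)

lemma mat_scale_eq_mat_mult: "mat_scale c A = mat c ** (A::'a::comm_ring_1^'n^'n)"
  unfolding matrix_matrix_mult_def mat_def mat_scale_def
  by (auto simp: vec_eq_iff if_distrib if_distribR sum.delta'[OF finite] cong: if_cong)

lemma mat_mult_commute: "mat c ** (A::'a::comm_ring_1^'n^'n) = A ** mat c"
  unfolding matrix_matrix_mult_def mat_def
  by (auto simp: vec_eq_iff if_distrib if_distribR sum.delta sum.delta' mult.commute cong: if_cong)

lemma mat_mult_left_commute: "mat c ** ((A::'a::comm_ring_1^'n^'n) ** B) = A ** (mat c ** B)"
  by (simp add: matrix_mul_assoc mat_mult_commute)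

lemma mat_add: "mat (a + b) = mat a + (mat b::'a::comm_ring_1^'n^'n)"
  by (simp add: mat_def vec_eq_iff)

lemma mat_mult: "mat (a * b) = mat a ** (mat b::'a::comm_ring_1^'n^'n)"
  by (simp flip: mat_scale_eq_mat_mult) (simp add: mat_scale_def mat_def vec_eq_iff)

lemma matrix_add_rdistrib: "(B + C) ** (A::'a::comm_ring_1^'n^'n) = B ** A + C ** A"
  by (simp add: matrix_matrix_mult_def vec_eq_iff distrib_right sum.distrib)

lemma matrix_mult_sum_right: "(A::'a::comm_ring_1^'n^'n) ** sum f S = (\<Sum>i\<in>S. A ** f i)"
  by (induct S rule: infinite_finite_induct) (simp_all add: matrix_add_ldistrib)

lemma matrix_vector_mult_sum_left: "sum A S *v (x::'a::comm_ring_1^'n) = (\<Sum>i\<in>S. A i *v x)"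
  by (induct S rule: infinite_finite_induct) (simp_all add: matrix_vector_mult_add_rdistrib)

lemma poly_mat_eq_sum_lessThan:
  assumes "degree p < N"
  shows "poly_mat p (A::'a::comm_ring_1^'n^'n) = (\<Sum>i<N. mat (coeff p i) ** mat_pow A i)"
  unfolding poly_mat_def mat_scale_eq_mat_mult
  using assms by (intro sum.mono_neutral_left) (auto simp: coeff_eq_0)

lemma poly_mat_0 [simp]: "poly_mat 0 A = 0"
  by (simp add: poly_mat_def mat_scale_def vec_eq_iff)

lemma poly_mat_const: "poly_mat [:a:] (A::'a::comm_ring_1^'n^'n) = mat a"
  by (simp add: poly_mat_def mat_scale_eq_mat_mult)

lemma poly_mat_1 [simp]: "poly_mat 1 (A::'a::comm_ring_1^'n^'n) = mat 1"
  using poly_mat_const[of 1 A] by (simp add: one_pCons)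

lemma poly_mat_add: "poly_mat (p + q) (A::'a::comm_ring_1^'n^'n) = poly_mat p A + poly_mat q A"
proof -
  define N where "N = Suc (max (degree p) (degree q))"
  have N: "degree p < N" "degree q < N" "degree (p + q) < N"
    using degree_add_le_max[of p q] by (auto simp: N_def)
  show ?thesis
    unfolding poly_mat_eq_sum_lessThan[OF N(1)] poly_mat_eq_sum_lessThan[OF N(2)]
      poly_mat_eq_sum_lessThan[OF N(3)]
    by (simp add: mat_add matrix_add_rdistrib sum.distrib)
qed

lemma poly_mat_smult: "poly_mat (smult c p) (A::'a::comm_ring_1^'n^'n) = mat c ** poly_mat p A"
proof -
  define N where "N = Suc (degree p)"
  have N: "degree p < N" "degree (smult c p) < N"
    using degree_smult_le[of c p] by (auto simp: N_def)
  show ?thesis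
    unfolding poly_mat_eq_sum_lessThan[OF N(1)] poly_mat_eq_sum_lessThan[OF N(2)]
    by (simp add: mat_mult matrix_mult_sum_right matrix_mul_assoc)
qed

lemma poly_mat_pCons_0: "poly_mat (pCons 0 p) (A::'a::comm_ring_1^'n^'n) = A ** poly_mat p A"
proof -
  define N where "N = Suc (degree p)"
  have N: "degree p < N" "degree (pCons 0 p) < Suc N"
    by (auto simp: N_def intro: le_less_trans[OF degree_pCons_le])
  show ?thesis
    unfolding poly_mat_eq_sum_lessThan[OF N(1)] poly_mat_eq_sum_lessThan[OF N(2)]
      sum.lessThan_Suc_shift
    by (simp add: mat_pow_Suc matrix_mult_sum_right mat_mult_left_commute)
qed

lemma poly_mat_mult: "poly_mat (p * q) (A::'a::comm_ring_1^'n^'n) = poly_mat p A ** poly_mat q A"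
proof (induct p)
  case (pCons a p)
  have "poly_mat (pCons a p * q) A = poly_mat (smult a q + pCons 0 (p * q)) A"
    by (simp add: mult_pCons_left)
  also have "\<dots> = mat a ** poly_mat q A + A ** (poly_mat p A ** poly_mat q A)"
    by (simp only: poly_mat_add poly_mat_smult poly_mat_pCons_0 pCons(2))
  also have "\<dots> = poly_mat ([:a:] + pCons 0 p) A ** poly_mat q A"
    by (simp only: poly_mat_add poly_mat_const poly_mat_pCons_0 matrix_add_rdistrib matrix_mul_assoc)
  finally show ?case
    by simp
qed simp

lemma poly_mat_commute: "poly_mat p (A::'a::comm_ring_1^'n^'n) ** poly_mat q A = poly_mat q A ** poly_mat p A"
  by (metis poly_mat_mult mult.commute)

lemma poly_mat_monom: "poly_mat (monom 1 j) (A::'a::comm_ring_1^'n^'n) = mat_pow A j"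
  by (induct j) (simp_all add: monom_0 monom_Suc poly_mat_const poly_mat_pCons_0 mat_pow_Suc)

lemma poly_mat_sum: "poly_mat (\<Sum>i\<in>S. p i) (A::'a::comm_ring_1^'n^'n) = (\<Sum>i\<in>S. poly_mat (p i) A)"
  by (induct S rule: infinite_finite_induct) (simp_all add: poly_mat_add)

lemma field_embedding_hom:
  assumes "field_embedding \<phi>"
  shows field_embedding_0: "\<phi> 0 = 0" and field_embedding_1: "\<phi> 1 = 1"
    and field_embedding_add: "\<phi> (a + b) = \<phi> a + \<phi> b"
    and field_embedding_mult: "\<phi> (a * b) = \<phi> a * \<phi> b"
  using assms unfolding field_embedding_def
  by (auto simp: add.commute[of "\<phi> 0"] dest: spec[of _ 0])

lemma field_embedding_sum:
  assumes "field_embedding \<phi>"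
  shows "\<phi> (sum f S) = (\<Sum>x\<in>S. \<phi> (f x))"
  by (induct S rule: infinite_finite_induct)
    (simp_all add: field_embedding_0[OF assms] field_embedding_add[OF assms])

lemma map_mat_mult:
  assumes "field_embedding \<phi>"
  shows "map_mat \<phi> (A ** B) = map_mat \<phi> A ** map_mat \<phi> B"
  by (simp add: map_mat_def matrix_matrix_mult_def vec_eq_iff
      field_embedding_sum[OF assms] field_embedding_mult[OF assms])

lemma map_mat_add:
  assumes "field_embedding \<phi>"
  shows "map_mat \<phi> (A + B) = map_mat \<phi> A + map_mat \<phi> B"
  by (simp add: map_mat_def vec_eq_iff field_embedding_add[OF assms])

lemma map_mat_0:
  assumes "field_embedding \<phi>"
  shows "map_mat \<phi> 0 = 0"
  by (simp add: map_mat_def vec_eq_iff field_embedding_0[OF assms])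

lemma map_mat_sum:
  assumes "field_embedding \<phi>"
  shows "map_mat \<phi> (sum f S) = (\<Sum>x\<in>S. map_mat \<phi> (f x))"
  by (induct S rule: infinite_finite_induct) (simp_all add: map_mat_0[OF assms] map_mat_add[OF assms])

lemma map_mat_mat:
  assumes "field_embedding \<phi>"
  shows "map_mat \<phi> (mat c) = mat (\<phi> c)"
  by (simp add: map_mat_def mat_def vec_eq_iff field_embedding_0[OF assms])

lemma map_mat_pow:
  assumes "field_embedding \<phi>"
  shows "map_mat \<phi> (mat_pow A i) = mat_pow (map_mat \<phi> A) i"
  by (induct i) (simp_all add: mat_pow_Suc map_mat_mult[OF assms] map_mat_mat[OF assms]
      field_embedding_1[OF assms])

lemma poly_mat_map_poly:
  assumes "field_embedding \<phi>"
  shows "poly_mat (map_poly \<phi> p) (map_mat \<phi> A) = map_mat \<phi> (poly_mat p (A::'a::field^'n^'n))"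
proof -
  define N where "N = Suc (degree p)"
  have N: "degree p < N" "degree (map_poly \<phi> p) < N"
    using map_poly_degree_leq[of \<phi> p] by (auto simp: N_def)
  show ?thesis
    unfolding poly_mat_eq_sum_lessThan[OF N(1)] poly_mat_eq_sum_lessThan[OF N(2)]
    by (simp add: map_mat_sum[OF assms] map_mat_mult[OF assms] map_mat_mat[OF assms]
        map_mat_pow[OF assms] coeff_map_poly field_embedding_0[OF assms])
qed

lemma map_mat_matrix_vector_mult:
  assumes "field_embedding \<phi>"
  shows "map_mat \<phi> A *v map_vec \<phi> x = map_vec \<phi> (A *v x)"
  by (simp add: map_mat_def map_vec_def matrix_vector_mult_def vec_eq_iff
      field_embedding_sum[OF assms] field_embedding_mult[OF assms])

lemma map_vec_vector_matrix_mult: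
  assumes "field_embedding \<phi>"
  shows "map_vec \<phi> x v* map_mat \<phi> A = map_vec \<phi> (x v* A)"
  by (simp add: map_mat_def map_vec_def vector_matrix_mult_def vec_eq_iff
      field_embedding_sum[OF assms] field_embedding_mult[OF assms])

lemma map_vec_0:
  assumes "field_embedding \<phi>"
  shows "map_vec \<phi> 0 = 0"
  by (simp add: map_vec_def vec_eq_iff field_embedding_0[OF assms])

lemma map_poly_dvd:
  assumes "field_embedding \<phi>" and "p dvd q"
  shows "map_poly \<phi> p dvd map_poly \<phi> q"
proof -
  have "map_poly \<phi> (p * r) = map_poly \<phi> p * map_poly \<phi> r" for r
    by (rule poly_eqI) (simp add: coeff_map_poly coeff_mult field_embedding_0[OF assms(1)]
        field_embedding_sum[OF assms(1)] field_embedding_mult[OF assms(1)])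
  then show ?thesis
    using assms(2) by (auto elim!: dvdE)
qed

section \<open>The coordinate pairing and orthogonal complements\<close>

definition vdot :: "'a::comm_semiring_1^'n \<Rightarrow> 'a^'n \<Rightarrow> 'a" where
  "vdot x y = (\<Sum>j\<in>UNIV. x $ j * y $ j)"

lemma vdot_add_right: "vdot x (y + z) = vdot x y + vdot x z"
  by (simp add: vdot_def distrib_left sum.distrib)

lemma vdot_scalar_mult_right: "vdot x (c *s y) = c * vdot x y"
  by (simp add: vdot_def sum_distrib_left mult_ac)

lemma vdot_0_left [simp]: "vdot 0 y = 0"
  by (simp add: vdot_def)

lemma vdot_0_right [simp]: "vdot x 0 = 0"
  by (simp add: vdot_def)

lemma vdot_sum_right: "vdot x (sum f S) = (\<Sum>i\<in>S. vdot x (f i))"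
  by (induct S rule: infinite_finite_induct) (simp_all add: vdot_add_right)

lemma vdot_mat_right: "vdot x (mat c *v y) = c * vdot x (y::'a::comm_ring_1^'n)"
proof -
  have "mat c *v y = c *s y"
    by (simp add: mat_def matrix_vector_mult_def vec_eq_iff if_distrib if_distribR sum.delta
        cong: if_cong)
  then show ?thesis
    by (simp add: vdot_scalar_mult_right)
qed

lemma vdot_matrix_vector_mult: "vdot x (A *v y) = vdot (x v* A) (y::'a::comm_semiring_1^'n)"
  unfolding vdot_def matrix_vector_mult_def vector_matrix_mult_def
  by (simp add: sum_distrib_left sum_distrib_right mult_ac) (rule sum.swap)

lemma vdot_axis: "vdot x (axis j 1) = x $ j"
  by (simp add: vdot_def axis_def if_distrib sum.delta' cong: if_cong)

lemma vdot_map_vec: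
  assumes "field_embedding \<phi>"
  shows "vdot (map_vec \<phi> x) (map_vec \<phi> y) = \<phi> (vdot x y)"
  by (simp add: vdot_def map_vec_def field_embedding_sum[OF assms] field_embedding_mult[OF assms])

lemma subspace_vdot_eq_0: "vec.subspace {y. vdot x y = 0}"
  unfolding vec.subspace_def by (simp add: vdot_add_right vdot_scalar_mult_right)

lemma vdot_eq_0_all_iff: "(\<forall>y. vdot x y = 0) \<longleftrightarrow> x = (0::'a::comm_semiring_1^'n)"
  by (metis vdot_axis vdot_0_left vec_eq_iff zero_index)

lemma matrix_with_rows:
  fixes B :: "('a::zero^'n) set"
  assumes "finite B" and "card B \<le> CARD('n)"
  obtains A :: "'a^'n^'n" where "B \<subseteq> rows A" and "rows A \<subseteq> insert 0 B"
proof -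
  obtain e :: "'a^'n \<Rightarrow> 'n" where e: "inj_on e B"
    using card_le_inj[of B "UNIV::'n set"] assms by auto
  define A :: "'a^'n^'n" where "A = (\<chi> i. if i \<in> e ` B then the_inv_into B e i else 0)"
  have row_A: "row i A = (if i \<in> e ` B then the_inv_into B e i else 0)" for i
    by (simp add: A_def row_def vec_eq_iff)
  have "B \<subseteq> rows A"
  proof
    fix x assume "x \<in> B"
    then have "row (e x) A = x"
      using e by (simp add: row_A the_inv_into_f_f)
    then show "x \<in> rows A"
      unfolding rows_def by (metis (mono_tags) UNIV_I mem_Collect_eq)
  qed
  moreover have "rows A \<subseteq> insert 0 B"
    using the_inv_into_into[OF e] by (auto simp: rows_def row_A)
  ultimately show ?thesis
    by (rule that)
qed

lemma matrix_vector_mult_nth_eq_vdot_row: "(A *v x) $ i = vdot (row i A) x"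
  by (simp add: vdot_def matrix_vector_mult_def row_def)

lemma orthogonal_vector_exists_if_dim_less:
  fixes W :: "('a::field^'n) set"
  assumes dim: "vec.dim W < CARD('n)"
  shows "\<exists>w. w \<noteq> 0 \<and> (\<forall>u\<in>W. vdot w u = 0)"
proof -
  obtain B where B: "B \<subseteq> W" "vec.independent B" "W \<subseteq> vec.span B" "card B = vec.dim W"
    using vec.basis_exists by blast
  have "finite B"
    using B(2) vec.finiteI_independent by blast
  then obtain A :: "'a^'n^'n" where A: "B \<subseteq> rows A" "rows A \<subseteq> insert 0 B"
    using matrix_with_rows B(4) dim by (metis less_imp_le)
  have "vec.span (rows A) \<noteq> UNIV"
  proof
    assume "vec.span (rows A) = UNIV"
    then have "vec.span B = UNIV"
      using A(2) by (metis vec.span_insert_0 vec.span_mono top.extremum_uniqueI)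
    then have "vec.dim W = CARD('n)"
      using B by (metis vec.dim_span_eq_card_independent vec_dim_card vec.dim_span)
    then show False
      using dim by simp
  qed
  then obtain x where x: "A *v x = 0" "x \<noteq> 0"
    unfolding matrix_left_invertible_span_rows_gen[symmetric] matrix_left_invertible_ker by blast
  then have "vdot r x = 0" if "r \<in> rows A" for r
    using that by (auto simp: rows_def simp flip: matrix_vector_mult_nth_eq_vdot_row)
  then have "vec.span B \<subseteq> {u. vdot x u = 0}"
    using A(1) by (intro vec.span_minimal subspace_vdot_eq_0) (auto simp: vdot_def mult.commute)
  then show ?thesis
    using B(3) x(2) by blast
qed

lemma dim_less_card_iff_orthogonal:
  fixes W :: "('a::field^'n) set"
  shows "vec.dim W < CARD('n) \<longleftrightarrow> (\<exists>w. w \<noteq> 0 \<and> (\<forall>u\<in>W. vdot w u = 0))"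
proof
  assume "vec.dim W < CARD('n)"
  then show "\<exists>w. w \<noteq> 0 \<and> (\<forall>u\<in>W. vdot w u = 0)"
    by (rule orthogonal_vector_exists_if_dim_less)
next
  assume "\<exists>w. w \<noteq> 0 \<and> (\<forall>u\<in>W. vdot w u = 0)"
  then obtain w where w: "w \<noteq> 0" "W \<subseteq> {u. vdot w u = 0}"
    by blast
  have "vec.span W \<noteq> UNIV"
    using vec.span_minimal[OF w(2) subspace_vdot_eq_0] w(1) vdot_eq_0_all_iff by blast
  moreover have "vec.span W = UNIV" if "vec.dim W = CARD('n)"
  proof -
    have "vec.dim (UNIV::('a^'n) set) \<le> vec.dim W"
      using that vec_dim_card[where 'a='a and 'n='n] by linarith
    then show ?thesis
      using vec.dim_eq_span[of W UNIV] by simp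
  qed
  ultimately show "vec.dim W < CARD('n)"
    using dim_subset_UNIV_cart_gen[of W] le_neq_implies_less by blast
qed

section \<open>Rank support and orthogonal vectors\<close>

lemma coords_expansion:
  assumes "is_K_basis \<phi> b m"
  shows "x = (\<Sum>i<m. \<phi> (coords \<phi> b m x i) * b i)"
  using theI'[OF assms[unfolded is_K_basis_def, rule_format, of x]] by (simp add: coords_def)

lemma K_basis_sum_eq_0_imp:
  assumes emb: "field_embedding \<phi>" and basis: "is_K_basis \<phi> b m"
    and sum: "(\<Sum>i<m. \<phi> (a i) * b i) = 0" and "i < m"
  shows "a i = 0"
proof -
  define a' where "a' j = (if j < m then a j else 0)" for j
  have "(\<Sum>j<m. \<phi> (a' j) * b j) = 0"
    using sum by (simp add: a'_def)
  moreover have "(\<Sum>j<m. \<phi> 0 * b j) = 0"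
    by (simp add: field_embedding_0[OF emb])
  ultimately have "a' = (\<lambda>_. 0)"
    using basis[unfolded is_K_basis_def, rule_format, of 0] by (auto simp: a'_def)
  then show ?thesis
    using \<open>i < m\<close> by (metis a'_def)
qed

definition coord_row :: "('k::field \<Rightarrow> 'l::field) \<Rightarrow> (nat \<Rightarrow> 'l) \<Rightarrow> nat \<Rightarrow> 'l^'n \<Rightarrow> nat \<Rightarrow> 'k^'n" where
  "coord_row \<phi> b m c i = (\<chi> j. coords \<phi> b m (c $ j) i)"

lemma Rsupp_eq_span_coord_rows: "Rsupp \<phi> b m c = vec.span {coord_row \<phi> b m c i | i. i < m}"
  by (simp add: Rsupp_def coord_row_def)

lemma vdot_map_vec_eq_sum_coord_rows:
  assumes emb: "field_embedding \<phi>" and basis: "is_K_basis \<phi> b m"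
  shows "vdot (map_vec \<phi> w) c = (\<Sum>i<m. \<phi> (vdot w (coord_row \<phi> b m c i)) * b i)"
proof -
  have "vdot (map_vec \<phi> w) c = (\<Sum>j\<in>UNIV. \<phi> (w $ j) * (\<Sum>i<m. \<phi> (coords \<phi> b m (c $ j) i) * b i))"
    unfolding vdot_def map_vec_def by (simp flip: coords_expansion[OF basis])
  also have "\<dots> = (\<Sum>i<m. \<Sum>j\<in>UNIV. \<phi> (w $ j * coords \<phi> b m (c $ j) i) * b i)"
    by (simp add: sum_distrib_left field_embedding_mult[OF emb] mult.assoc) (rule sum.swap)
  also have "\<dots> = (\<Sum>i<m. \<phi> (vdot w (coord_row \<phi> b m c i)) * b i)"
    by (simp add: vdot_def coord_row_def field_embedding_sum[OF emb] sum_distrib_right)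
  finally show ?thesis .
qed

lemma orthogonal_code_iff_orthogonal_Rsupp:
  assumes emb: "field_embedding \<phi>" and basis: "is_K_basis \<phi> b m"
  shows "(\<forall>c\<in>C. vdot (map_vec \<phi> w) c = 0) \<longleftrightarrow>
         (\<forall>u\<in>vec.span (\<Union>c\<in>C. Rsupp \<phi> b m c). vdot w u = 0)"
proof
  assume orth: "\<forall>c\<in>C. vdot (map_vec \<phi> w) c = 0"
  have "Rsupp \<phi> b m c \<subseteq> {u. vdot w u = 0}" if "c \<in> C" for c
    unfolding Rsupp_eq_span_coord_rows
  proof (intro vec.span_minimal subspace_vdot_eq_0, safe)
    fix i assume "i < m"
    moreover have "(\<Sum>i<m. \<phi> (vdot w (coord_row \<phi> b m c i)) * b i) = 0"
      using orth that by (simp flip: vdot_map_vec_eq_sum_coord_rows[OF emb basis])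
    ultimately show "vdot w (coord_row \<phi> b m c i) = 0"
      using K_basis_sum_eq_0_imp[OF emb basis, of "\<lambda>i. vdot w (coord_row \<phi> b m c i)"] by blast
  qed
  then have "vec.span (\<Union>c\<in>C. Rsupp \<phi> b m c) \<subseteq> {u. vdot w u = 0}"
    by (intro vec.span_minimal subspace_vdot_eq_0) blast
  then show "\<forall>u\<in>vec.span (\<Union>c\<in>C. Rsupp \<phi> b m c). vdot w u = 0"
    by blast
next
  assume orth: "\<forall>u\<in>vec.span (\<Union>c\<in>C. Rsupp \<phi> b m c). vdot w u = 0"
  show "\<forall>c\<in>C. vdot (map_vec \<phi> w) c = 0"
  proof
    fix c assume "c \<in> C"
    then have "coord_row \<phi> b m c i \<in> vec.span (\<Union>c\<in>C. Rsupp \<phi> b m c)" if "i < m" for i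
      using that unfolding Rsupp_eq_span_coord_rows by (blast intro: vec.span_base)
    then show "vdot (map_vec \<phi> w) c = 0"
      using orth by (simp add: vdot_map_vec_eq_sum_coord_rows[OF emb basis] field_embedding_0[OF emb])
  qed
qed

lemma wtR_eq_card_iff_no_orthogonal:
  fixes C :: "('l::field^'n) set"
  assumes emb: "field_embedding \<phi>" and basis: "is_K_basis \<phi> b m"
  shows "wtR \<phi> b m C = CARD('n) \<longleftrightarrow> \<not> (\<exists>w. w \<noteq> 0 \<and> (\<forall>c\<in>C. vdot (map_vec \<phi> w) c = 0))"
  using dim_less_card_iff_orthogonal[of "vec.span (\<Union>c\<in>C. Rsupp \<phi> b m c)"]
    dim_subset_UNIV_cart_gen[of "vec.span (\<Union>c\<in>C. Rsupp \<phi> b m c)"]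
  unfolding wtR_def orthogonal_code_iff_orthogonal_Rsupp[OF emb basis]
  by (metis le_neq_implies_less order_less_irrefl)

lemma Mr_dim_eq_wtR:
  assumes "vec.subspace C"
  shows "Mr \<phi> b m (vec.dim C) C = wtR \<phi> b m C"
proof -
  have "D = C" if "vec.subspace D" "D \<subseteq> C" "vec.dim D = vec.dim C" for D
    using vec.dim_eq_span[OF that(2)] that assms by (metis order_refl vec.span_eq_iff)
  then have "{wtR \<phi> b m D | D. vec.subspace D \<and> D \<subseteq> C \<and> vec.dim D = vec.dim C} = {wtR \<phi> b m C}"
    using assms by blast
  then show ?thesis
    by (simp add: Mr_def)
qed

section \<open>Ideals of K[x]\<close>

text \<open>Polynomials over an arbitrary field carry no gcd instance in the library (that needs a
  normalisation on the coefficients), so the little ideal theory of K[x] used below is proved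
  directly.\<close>

definition is_ideal :: "'a::comm_ring_1 set \<Rightarrow> bool" where
  "is_ideal I \<longleftrightarrow> 0 \<in> I \<and> (\<forall>x\<in>I. \<forall>y\<in>I. x + y \<in> I) \<and> (\<forall>x\<in>I. \<forall>r. r * x \<in> I)"

lemma is_idealD:
  assumes "is_ideal I"
  shows ideal_0: "0 \<in> I" and ideal_add: "x \<in> I \<Longrightarrow> y \<in> I \<Longrightarrow> x + y \<in> I"
    and ideal_mult: "x \<in> I \<Longrightarrow> r * x \<in> I"
  using assms by (auto simp: is_ideal_def)

lemma ideal_diff:
  assumes "is_ideal I" "x \<in> I" "y \<in> I"
  shows "x - y \<in> I"
  using ideal_add[OF assms(1,2) ideal_mult[OF assms(1,3), of "-1"]] by (simp only: mult_minus1 diff_conv_add_uminus)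

lemma poly_ideal_principal:
  fixes I :: "'a::field poly set"
  assumes I: "is_ideal I"
  shows "\<exists>h\<in>I. \<forall>q\<in>I. h dvd q"
proof (cases "I \<subseteq> {0}")
  case True
  then show ?thesis
    using ideal_0[OF I] by auto
next
  case False
  then obtain h where h: "h \<in> I" "h \<noteq> 0" and min: "\<forall>q. q \<in> I \<and> q \<noteq> 0 \<longrightarrow> degree h \<le> degree q"
    using ex_has_least_nat[of "\<lambda>q. q \<in> I \<and> q \<noteq> 0" _ degree] by blast
  have "h dvd q" if "q \<in> I" for q
  proof (rule ccontr)
    assume "\<not> h dvd q"
    then have "q mod h \<noteq> 0"
      by (simp add: mod_eq_0_iff_dvd)
    moreover have "q mod h \<in> I"
      using ideal_diff[OF I that ideal_mult[OF I h(1), of "q div h"]] by (simp add: minus_div_mult_eq_mod)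
    ultimately show False
      using min degree_mod_less'[OF h(2), of q] by fastforce
  qed
  then show ?thesis
    using h(1) by blast
qed

lemma is_ideal_linear_combinations: "is_ideal {x. \<exists>a b. x = a * p + b * q}"
  unfolding is_ideal_def
proof (intro conjI ballI allI)
  show "0 \<in> {x. \<exists>a b. x = a * p + b * q}"
    by (rule CollectI, rule exI[of _ 0], rule exI[of _ 0]) simp
next
  fix x y assume "x \<in> {x. \<exists>a b. x = a * p + b * q}" "y \<in> {x. \<exists>a b. x = a * p + b * q}"
  then obtain a b c d where "x = a * p + b * q" "y = c * p + d * q"
    by blast
  then have "x + y = (a + c) * p + (b + d) * q"
    by (simp add: algebra_simps)
  then show "x + y \<in> {x. \<exists>a b. x = a * p + b * q}"
    by blast
next
  fix x r assume "x \<in> {x. \<exists>a b. x = a * p + b * q}"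
  then obtain a b where "x = a * p + b * q"
    by blast
  then have "r * x = (r * a) * p + (r * b) * q"
    by (simp add: algebra_simps)
  then show "r * x \<in> {x. \<exists>a b. x = a * p + b * q}"
    by blast
qed

lemma irreducible_bezout:
  fixes p q :: "'a::field poly"
  assumes irr: "irreducible p" and "\<not> p dvd q"
  shows "\<exists>a b. a * p + b * q = 1"
proof -
  define I where "I = {x. \<exists>a b. x = a * p + b * q}"
  have I: "is_ideal I"
    unfolding I_def by (rule is_ideal_linear_combinations)
  obtain h where h: "h \<in> I" "\<forall>x\<in>I. h dvd x"
    using poly_ideal_principal[OF I] by blast
  have "p \<in> I"
    unfolding I_def by (rule CollectI, rule exI[of _ 1], rule exI[of _ 0]) simp
  moreover have "q \<in> I"
    unfolding I_def by (rule CollectI, rule exI[of _ 0], rule exI[of _ 1]) simp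
  ultimately have "h dvd p" "h dvd q"
    using h(2) by blast+
  then have "is_unit h"
    using irreducibleD'[OF irr \<open>h dvd p\<close>] \<open>\<not> p dvd q\<close> by (meson dvd_trans)
  then have "1 \<in> I"
    using ideal_mult[OF I h(1), of "1 div h"] by simp
  then show ?thesis
    unfolding I_def by auto
qed

lemma ideal_one_diff_power:
  assumes "is_ideal I" and "1 - x \<in> I"
  shows "1 - x ^ k \<in> I"
  unfolding one_diff_power_eq mult.commute[of "1 - x"] by (rule ideal_mult[OF assms])

lemma ideal_one_diff_prod:
  assumes I: "is_ideal I" and "finite S" and "\<forall>i\<in>S. 1 - x i \<in> I"
  shows "1 - prod x S \<in> I"
  using assms(2,3)
proof (induct S rule: finite_induct)
  case empty
  then show ?case
    using ideal_0[OF I] by simp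
next
  case (insert j S)
  have "(1 - x j) + x j * (1 - prod x S) \<in> I"
    using insert by (intro ideal_add[OF I] ideal_mult[OF I]) simp_all
  moreover have "1 - prod x (insert j S) = (1 - x j) + x j * (1 - prod x S)"
    using insert(1,2) by (simp add: algebra_simps)
  ultimately show ?case
    by (simp only:)
qed

lemma ideal_common_irreducible_factor:
  fixes fs :: "'i \<Rightarrow> 'a::field poly"
  assumes I: "is_ideal I" and "1 \<notin> I" and "finite S" and irr: "\<forall>i\<in>S. irreducible (fs i)"
    and prod: "(\<Prod>i\<in>S. fs i ^ ms i) \<in> I" and "G \<subseteq> I"
  shows "\<exists>i\<in>S. \<forall>q\<in>G. fs i dvd q"
proof (rule ccontr)
  \<comment> \<open>Otherwise Bezout gives 1 \<equiv> a_i f_i modulo I for every i; multiplying these congruences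
    makes 1 congruent to a multiple of \<Prod> f_i^m_i, which lies in I.\<close>
  assume none: "\<not> (\<exists>i\<in>S. \<forall>q\<in>G. fs i dvd q)"
  have "\<forall>i\<in>S. \<exists>a. 1 - a * fs i \<in> I"
  proof
    fix i assume "i \<in> S"
    obtain q where q: "q \<in> G" "\<not> fs i dvd q"
      using none \<open>i \<in> S\<close> by blast
    then obtain a b where "a * fs i + b * q = 1"
      using irreducible_bezout[of "fs i" q] irr \<open>i \<in> S\<close> by blast
    then have "1 - a * fs i = b * q"
      by (simp add: algebra_simps)
    then show "\<exists>a. 1 - a * fs i \<in> I"
      using ideal_mult[OF I subsetD[OF \<open>G \<subseteq> I\<close> q(1)], of b] by metis
  qed
  then obtain a where a: "\<forall>i\<in>S. 1 - a i * fs i \<in> I"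
    using bchoice[of S "\<lambda>i a. 1 - a * fs i \<in> I"] by blast
  have "1 - (\<Prod>i\<in>S. (a i * fs i) ^ ms i) \<in> I"
    using a by (intro ideal_one_diff_prod[OF I \<open>finite S\<close>]) (simp add: ideal_one_diff_power[OF I])
  moreover have "(\<Prod>i\<in>S. (a i * fs i) ^ ms i) \<in> I"
    using ideal_mult[OF I prod, of "\<Prod>i\<in>S. a i ^ ms i"] by (simp add: power_mult_distrib prod.distrib)
  ultimately have "(1 - (\<Prod>i\<in>S. (a i * fs i) ^ ms i)) + (\<Prod>i\<in>S. (a i * fs i) ^ ms i) \<in> I"
    by (rule ideal_add[OF I])
  then show False
    using \<open>1 \<notin> I\<close> by simp
qed

definition poly_annihilator :: "'a::field^'n^'n \<Rightarrow> 'a^'n \<Rightarrow> 'a poly set" where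
  "poly_annihilator A w = {q. w v* poly_mat q A = 0}"

lemma is_ideal_poly_annihilator: "is_ideal (poly_annihilator A w)"
  unfolding is_ideal_def poly_annihilator_def
  by (simp add: poly_mat_add vector_matrix_mult_add_rdistrib poly_mat_mult poly_mat_commute[of _ A]
      flip: vector_matrix_mul_assoc)

lemma one_notin_poly_annihilator: "w \<noteq> 0 \<Longrightarrow> 1 \<notin> poly_annihilator A w"
  by (simp add: poly_annihilator_def)

lemma cyclic_vector_orthogonal_imp_left_null:
  assumes "cyclic_vector A v"
    and "\<forall>j<CARD('n). vdot w (F *v (mat_pow A j *v v)) = 0"
  shows "w v* F = (0::'a::field^'n)"
proof -
  have "(\<lambda>j. mat_pow A j *v v) ` {..<CARD('n)} \<subseteq> {y. vdot (w v* F) y = 0}"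
    using assms(2) by (auto simp: vdot_matrix_vector_mult)
  then have "vec.span ((\<lambda>j. mat_pow A j *v v) ` {..<CARD('n)}) \<subseteq> {y. vdot (w v* F) y = 0}"
    by (intro vec.span_minimal subspace_vdot_eq_0)
  then show ?thesis
    using assms(1) vdot_eq_0_all_iff by (auto simp: cyclic_vector_def)
qed

definition coord_poly :: "('k::field \<Rightarrow> 'l::field) \<Rightarrow> (nat \<Rightarrow> 'l) \<Rightarrow> nat \<Rightarrow> 'l poly \<Rightarrow> nat \<Rightarrow> 'k poly" where
  "coord_poly \<phi> b m g t = (\<Sum>i\<le>degree g. monom (coords \<phi> b m (coeff g i) t) i)"

lemma poly_eq_sum_coord_polys:
  assumes emb: "field_embedding \<phi>" and basis: "is_K_basis \<phi> b m"
  shows "g = (\<Sum>t<m. smult (b t) (map_poly \<phi> (coord_poly \<phi> b m g t)))"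
proof (rule poly_eqI)
  fix j
  have coeff_coord_poly: "coeff (coord_poly \<phi> b m g t) j =
      (if j \<le> degree g then coords \<phi> b m (coeff g j) t else 0)" for t
    by (simp add: coord_poly_def coeff_sum coeff_monom)
  show "coeff g j = coeff (\<Sum>t<m. smult (b t) (map_poly \<phi> (coord_poly \<phi> b m g t))) j"
  proof (cases "j \<le> degree g")
    case True
    then show ?thesis
      using coords_expansion[OF basis, of "coeff g j"]
      by (simp add: coeff_sum coeff_map_poly field_embedding_0[OF emb] coeff_coord_poly mult.commute)
  next
    case False
    then show ?thesis
      by (simp add: coeff_sum coeff_map_poly field_embedding_0[OF emb] coeff_coord_poly coeff_eq_0)
  qed
qed

lemma vdot_code_element_eq_sum:
  fixes A F :: "'k::field^'n^'n" and \<phi> :: "'k \<Rightarrow> 'l::field"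
  assumes emb: "field_embedding \<phi>"
    and g: "g = (\<Sum>t<m. smult (b t) (map_poly \<phi> (G t)))"
  shows "vdot (map_vec \<phi> w) ((map_mat \<phi> F ** poly_mat g (map_mat \<phi> A)) *v map_vec \<phi> v)
       = (\<Sum>t<m. \<phi> (vdot w ((F ** poly_mat (G t) A) *v v)) * b t)"
proof -
  have "map_mat \<phi> F ** poly_mat g (map_mat \<phi> A) = (\<Sum>t<m. mat (b t) ** map_mat \<phi> (F ** poly_mat (G t) A))"
    unfolding g poly_mat_sum poly_mat_smult poly_mat_map_poly[OF emb]
    by (simp add: matrix_mult_sum_right mat_mult_left_commute map_mat_mult[OF emb])
  then show ?thesis
    by (simp add: matrix_vector_mult_sum_left map_mat_matrix_vector_mult[OF emb]
        flip: matrix_vector_mul_assoc)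
      (simp add: vdot_sum_right vdot_mat_right vdot_map_vec[OF emb] mult.commute)
qed

lemma coord_poly_in_poly_annihilator:
  assumes emb: "field_embedding \<phi>" and basis: "is_K_basis \<phi> b m" and cv: "cyclic_vector M v"
    and orth: "\<forall>c\<in>code_of_gen \<phi> M v g. vdot (map_vec \<phi> w) c = 0" and "t < m"
  shows "coord_poly \<phi> b m g t \<in> poly_annihilator M w"
proof -
  define G where "G = coord_poly \<phi> b m g"
  have g: "g = (\<Sum>t<m. smult (b t) (map_poly \<phi> (G t)))"
    unfolding G_def by (rule poly_eq_sum_coord_polys[OF emb basis])
  have "vdot w ((mat_pow M j ** poly_mat (G t) M) *v v) = 0" for j
  proof -
    have "(map_mat \<phi> (mat_pow M j) ** poly_mat g (map_mat \<phi> M)) *v map_vec \<phi> v \<in> code_of_gen \<phi> M v g"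
      unfolding code_of_gen_def
      by (rule CollectI, rule exI[of _ "monom 1 j"]) (simp add: poly_mat_monom map_mat_pow[OF emb])
    then have "(\<Sum>t<m. \<phi> (vdot w ((mat_pow M j ** poly_mat (G t) M) *v v)) * b t) = 0"
      using orth by (simp flip: vdot_code_element_eq_sum[OF emb g])
    then show ?thesis
      using K_basis_sum_eq_0_imp[OF emb basis, of "\<lambda>t. vdot w ((mat_pow M j ** poly_mat (G t) M) *v v)"]
        \<open>t < m\<close> by blast
  qed
  moreover have "mat_pow M j ** poly_mat (G t) M = poly_mat (G t) M ** mat_pow M j" for j
    using poly_mat_commute[of "monom 1 j" M "G t"] by (simp add: poly_mat_monom)
  ultimately have "w v* poly_mat (G t) M = 0"
    by (intro cyclic_vector_orthogonal_imp_left_null[OF cv]) (simp add: matrix_vector_mul_assoc)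
  then show ?thesis
    by (simp add: poly_annihilator_def G_def)
qed

lemma factor_dvd_generator_if_orthogonal:
  assumes emb: "field_embedding \<phi>" and basis: "is_K_basis \<phi> b m"
    and minpol: "minimal_polynomial M f" and "finite S" and fact: "f = (\<Prod>i\<in>S. fs i ^ ms i)"
    and irr: "\<forall>i\<in>S. irreducible (fs i)" and cv: "cyclic_vector M v"
    and "w \<noteq> 0" and orth: "\<forall>c\<in>code_of_gen \<phi> M v g. vdot (map_vec \<phi> w) c = 0"
  shows "\<exists>i\<in>S. map_poly \<phi> (fs i) dvd g"
proof -
  have "(\<Prod>i\<in>S. fs i ^ ms i) \<in> poly_annihilator M w"
    using minpol by (simp add: poly_annihilator_def minimal_polynomial_def flip: fact)
  then have "\<exists>i\<in>S. \<forall>q\<in>coord_poly \<phi> b m g ` {..<m}. fs i dvd q"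
    using irr coord_poly_in_poly_annihilator[OF emb basis cv orth] \<open>finite S\<close>
    by (intro ideal_common_irreducible_factor[OF is_ideal_poly_annihilator
          one_notin_poly_annihilator[OF \<open>w \<noteq> 0\<close>]]) auto
  then obtain i where "i \<in> S" "\<forall>t<m. fs i dvd coord_poly \<phi> b m g t"
    by auto
  then have "map_poly \<phi> (fs i) dvd (\<Sum>t<m. smult (b t) (map_poly \<phi> (coord_poly \<phi> b m g t)))"
    by (intro dvd_sum dvd_smult map_poly_dvd[OF emb]) simp
  then show ?thesis
    using \<open>i \<in> S\<close> poly_eq_sum_coord_polys[OF emb basis, of g] by auto
qed

lemma left_null_vector_of_proper_factor:
  fixes A :: "'a::field^'n^'n"
  assumes minpol: "minimal_polynomial A f" and "p dvd f" and "\<not> is_unit p"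
  shows "\<exists>w. w \<noteq> 0 \<and> w v* poly_mat p A = 0"
proof (rule ccontr)
  assume none: "\<not> (\<exists>w. w \<noteq> 0 \<and> w v* poly_mat p A = 0)"
  have "\<forall>x. transpose (poly_mat p A) *v x = 0 \<longrightarrow> x = 0"
    using none by (simp only: transpose_matrix_vector) blast
  then obtain B :: "'a^'n^'n" where "B ** transpose (poly_mat p A) = mat 1"
    unfolding matrix_left_invertible_ker[symmetric] by blast
  then have "transpose (B ** transpose (poly_mat p A)) = mat 1"
    by simp
  then have "poly_mat p A ** transpose B = mat 1"
    by (simp only: matrix_transpose_mul transpose_transpose)
  then have inv: "transpose B ** poly_mat p A = mat 1"
    by (simp only: matrix_left_right_inverse)
  obtain r where f: "f = p * r"
    using \<open>p dvd f\<close> by blast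
  have "poly_mat r A = transpose B ** (poly_mat p A ** poly_mat r A)"
    by (simp add: matrix_mul_assoc inv)
  also have "\<dots> = 0"
    using minpol by (simp add: minimal_polynomial_def f flip: poly_mat_mult)
  finally have "p * r dvd 1 * r"
    using minpol by (simp add: minimal_polynomial_def f)
  moreover have "r \<noteq> 0"
    using minpol by (auto simp: minimal_polynomial_def f)
  ultimately show False
    using \<open>\<not> is_unit p\<close> dvd_times_right_cancel_iff by blast
qed

lemma orthogonal_if_factor_dvd_generator:
  assumes emb: "field_embedding \<phi>" and minpol: "minimal_polynomial M f"
    and "p dvd f" and "\<not> is_unit p" and "map_poly \<phi> p dvd g"
  shows "\<exists>w. w \<noteq> 0 \<and> (\<forall>c\<in>code_of_gen \<phi> M v g. vdot (map_vec \<phi> w) c = 0)"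
proof -
  obtain w where w: "w \<noteq> 0" "w v* poly_mat p M = 0"
    using left_null_vector_of_proper_factor[OF minpol \<open>p dvd f\<close> \<open>\<not> is_unit p\<close>] by blast
  obtain q where g: "g = map_poly \<phi> p * q"
    using \<open>map_poly \<phi> p dvd g\<close> by blast
  have "vdot (map_vec \<phi> w) c = 0" if c: "c \<in> code_of_gen \<phi> M v g" for c
  proof -
    obtain P where c: "c = (poly_mat P (map_mat \<phi> M) ** poly_mat g (map_mat \<phi> M)) *v map_vec \<phi> v"
      using c unfolding code_of_gen_def by blast
    have "poly_mat P (map_mat \<phi> M) ** poly_mat g (map_mat \<phi> M)
        = poly_mat (map_poly \<phi> p * (q * P)) (map_mat \<phi> M)"
      by (simp add: g mult_ac flip: poly_mat_mult)
    also have "\<dots> = map_mat \<phi> (poly_mat p M) ** poly_mat (q * P) (map_mat \<phi> M)"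
      by (simp only: poly_mat_mult poly_mat_map_poly[OF emb])
    finally have "c = map_mat \<phi> (poly_mat p M) *v (poly_mat (q * P) (map_mat \<phi> M) *v map_vec \<phi> v)"
      by (simp add: c matrix_vector_mul_assoc)
    then show ?thesis
      using w(2) by (simp add: vdot_matrix_vector_mult map_vec_vector_matrix_mult[OF emb] map_vec_0[OF emb])
  qed
  then show ?thesis
    using w(1) by blast
qed

lemma orthogonal_exists_iff_factor_dvd_generator:
  assumes emb: "field_embedding \<phi>" and basis: "is_K_basis \<phi> b m"
    and minpol: "minimal_polynomial M f" and "finite S" and fact: "f = (\<Prod>i\<in>S. fs i ^ ms i)"
    and irr: "\<forall>i\<in>S. irreducible (fs i)" and mult: "\<forall>i\<in>S. ms i \<ge> 1" and cv: "cyclic_vector M v"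
  shows "(\<exists>w. w \<noteq> 0 \<and> (\<forall>c\<in>code_of_gen \<phi> M v g. vdot (map_vec \<phi> w) c = 0)) \<longleftrightarrow>
         (\<exists>i\<in>S. map_poly \<phi> (fs i) dvd g)"
proof
  assume "\<exists>w. w \<noteq> 0 \<and> (\<forall>c\<in>code_of_gen \<phi> M v g. vdot (map_vec \<phi> w) c = 0)"
  then show "\<exists>i\<in>S. map_poly \<phi> (fs i) dvd g"
    using factor_dvd_generator_if_orthogonal[OF emb basis minpol \<open>finite S\<close> fact irr cv] by blast
next
  assume "\<exists>i\<in>S. map_poly \<phi> (fs i) dvd g"
  then obtain i where i: "i \<in> S" "map_poly \<phi> (fs i) dvd g"
    by blast
  have "fs i dvd fs i ^ ms i"
    using mult i(1) by (intro dvd_power) auto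
  also have "\<dots> dvd f"
    unfolding fact using i(1) \<open>finite S\<close> by (intro dvd_prodI) auto
  finally show "\<exists>w. w \<noteq> 0 \<and> (\<forall>c\<in>code_of_gen \<phi> M v g. vdot (map_vec \<phi> w) c = 0)"
    using orthogonal_if_factor_dvd_generator[OF emb minpol _ _ i(2)] irr i(1) irreducible_not_unit
    by blast
qed

theorem corollary4:
  fixes \<phi> :: "'k::field \<Rightarrow> 'l::field"
    and b :: "nat \<Rightarrow> 'l" and m :: nat
    and M :: "'k^'n^'n" and v :: "'k^'n"
    and f :: "'k poly" and s :: nat and fs :: "nat \<Rightarrow> 'k poly" and ms :: "nat \<Rightarrow> nat"
    and C :: "('l^'n) set" and k :: nat and g :: "'l poly"
  assumes emb: "field_embedding \<phi>"
    and basis: "is_K_basis \<phi> b m"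
    and deg: "m \<ge> CARD('n)"
    and cyc: "cyclic_matrix M"
    and minpol: "minimal_polynomial M f"
    and fact: "f = (\<Prod>i<s. fs i ^ ms i)"
    and irr: "\<forall>i<s. lead_coeff (fs i) = 1 \<and> irreducible (fs i)"
    and dist: "inj_on fs {..<s}"
    and mult: "\<forall>i<s. ms i \<ge> 1"
    and code: "M_cyclic_code \<phi> M C"
    and nonzero: "C \<noteq> {0}"
    and dimC: "vec.dim C = k"
    and cv: "cyclic_vector M v"
    and gen: "generator_polynomial \<phi> M v f C g"
  shows "Mr \<phi> b m k C = CARD('n) \<longleftrightarrow> (\<forall>i<s. \<not> map_poly \<phi> (fs i) dvd g)"
proof -
  have C: "C = code_of_gen \<phi> M v g"
    using gen by (simp add: generator_polynomial_def)
  have "Mr \<phi> b m k C = wtR \<phi> b m C"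
    using Mr_dim_eq_wtR code dimC by (auto simp: M_cyclic_code_def)
  moreover have "(\<exists>w. w \<noteq> 0 \<and> (\<forall>c\<in>C. vdot (map_vec \<phi> w) c = 0)) \<longleftrightarrow>
      (\<exists>i\<in>{..<s}. map_poly \<phi> (fs i) dvd g)"
    unfolding C using irr mult
    by (intro orthogonal_exists_iff_factor_dvd_generator[OF emb basis minpol finite_lessThan fact _ _ cv])
      auto
  ultimately show ?thesis
    using wtR_eq_card_iff_no_orthogonal[OF emb basis, of C] by auto
qed

end
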